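(* Let $m,n_1,n_2\in\mathbb{N}$ with $m\ge1$. For $i=1,2$ let $\ell_i:V_i\to\mathbb{Z}_m$ be a $\mathbb{Z}_m$-cordial labeling of the friendship graph $F_{n_i}$ with the central vertex labeled $0$. Assume moreover that the labeling $\ell_2$ of $F_{n_2}$ has vertex and edge frequency distributions $f_{V_2}(0)=r+1$, $f_{V_2}(i)=r$ for all $i\ne0$, and $f_{E_2}(j)=s$ for all $j\in\mathbb{Z}_m$, for some integers $r,s$. Then the labeling $F_{n_1}+F_{n_2}$ of $F_{n_1+n_2}$ is $\mathbb{Z}_m$-cordial.
   Context: For $n\in\mathbb{N}$, the friendship graph $F_n$ is the union of $n$ copies of the triangle $C_3$ joined at a single common (central) vertex. For labelings $\ell_i$ of $F_{n_i}$ ($i=1,2$) both labeling the central vertex $0$, $F_{n_1}+F_{n_2}$ denotes the labeling of $F_{n_1+n_2}$ whose central vertex is labeled $0$, whose first $n_1$ triangles are labeled as by $\ell_1$ and whose remaining $n_2$ triangles are labeled as by $\ell_2$. For an abelian group $A$ and a graph $G=(V,E)$, a vertex labeling $\ell:V\to A$ induces an edge labeling $\ell(\{v_1,v_2\})=\ell(v_1)+\ell(v_2)$. Let $f_V(a)=|\{v\in V:\ell(v)=a\}|$ and $f_E(a)=|\{e\in E:\ell(e)=a\}|$. The labeling is $A$-cordial if $|f_V(a_1)-f_V(a_2)|\le 1$ and $|f_E(a_1)-f_E(a_2)|\le 1$ for all $a_1,a_2\in A$. *)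

theory Defs
  imports Main
begin

(* Vertices of the friendship graph F_n: the central vertex is None,
   the two outer vertices of the k-th triangle (k < n) are Some (k,0), Some (k,1). *)
type_synonym fvert = "(nat \<times> nat) option"

definition friendship_vertices :: "nat \<Rightarrow> fvert set" where
  "friendship_vertices n = insert None {Some (k, b) | k b. k < n \<and> b < 2}"

definition friendship_edges :: "nat \<Rightarrow> fvert set set" where
  "friendship_edges n =
     (\<Union>k\<in>{..<n}. {{None, Some (k, 0)}, {None, Some (k, 1)}, {Some (k, 0), Some (k, 1)}})"

(* Z_m is represented by {0..<m} with addition mod m. *)
definition vfreq :: "nat \<Rightarrow> 'v set \<Rightarrow> ('v \<Rightarrow> nat) \<Rightarrow> nat \<Rightarrow> nat" where
  "vfreq m V l a = card {v \<in> V. l v = a}"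

definition efreq :: "nat \<Rightarrow> 'v set set \<Rightarrow> ('v \<Rightarrow> nat) \<Rightarrow> nat \<Rightarrow> nat" where
  "efreq m E l a = card {e \<in> E. (\<Sum>v\<in>e. l v) mod m = a}"

definition Zm_cordial :: "nat \<Rightarrow> 'v set \<Rightarrow> 'v set set \<Rightarrow> ('v \<Rightarrow> nat) \<Rightarrow> bool" where
  "Zm_cordial m V E l \<longleftrightarrow>
     (\<forall>v\<in>V. l v < m) \<and>
     (\<forall>a1<m. \<forall>a2<m. \<bar>int (vfreq m V l a1) - int (vfreq m V l a2)\<bar> \<le> 1) \<and>
     (\<forall>a1<m. \<forall>a2<m. \<bar>int (efreq m E l a1) - int (efreq m E l a2)\<bar> \<le> 1)"

definition friendship_sum :: "nat \<Rightarrow> (fvert \<Rightarrow> nat) \<Rightarrow> (fvert \<Rightarrow> nat) \<Rightarrow> fvert \<Rightarrow> nat" where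
  "friendship_sum n1 l1 l2 v =
     (case v of None \<Rightarrow> 0
      | Some (k, b) \<Rightarrow> (if k < n1 then l1 (Some (k, b)) else l2 (Some (k - n1, b))))"

end

theory Submission
  imports Defs
begin

(* F_{n1+n2} is F_{n1} together with a copy of F_{n2}, its triangles shifted by n1, glued
   at the centre.  Under F_{n1} + F_{n2} the edge frequencies of the two parts therefore add,
   and so do the vertex frequencies, except that the common centre (label 0) is counted twice.
   Since l2 has constant edge frequency s and, after removing the centre, constant vertex
   frequency r, the frequencies of the sum are those of l1 shifted by the constants r and s;
   all pairwise differences, and hence cordiality, are inherited from l1. *)

lemma lessThan_add_eq_Un_image: "{..<n1 + n2 :: nat} = {..<n1} \<union> (\<lambda>k. k + n1) ` {..<n2}"
proof -
  have "{..<n1 + n2} = {..<n1} \<union> {n1..<n2 + n1}" by auto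
  also have "{n1..<n2 + n1} = (\<lambda>k. k + n1) ` {..<n2}" by (simp add: lessThan_atLeast0)
  finally show ?thesis .
qed

lemma card_subset_singleton: "A \<subseteq> {x} \<Longrightarrow> card A = (if x \<in> A then 1 else 0)"
  by (auto simp: subset_singleton_iff)

lemma Collect_Un_image_eq:
  assumes "\<And>x. x \<in> A \<Longrightarrow> P x \<longleftrightarrow> Q x" and "\<And>y. y \<in> B \<Longrightarrow> P (h y) \<longleftrightarrow> R y"
  shows "{x \<in> A \<union> h ` B. P x} = {x \<in> A. Q x} \<union> h ` {y \<in> B. R y}"
  using assms by auto

definition shift_fvert :: "nat \<Rightarrow> fvert \<Rightarrow> fvert" where
  "shift_fvert n v = (case v of None \<Rightarrow> None | Some (k, b) \<Rightarrow> Some (k + n, b))"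

lemma shift_fvert_None [simp]: "shift_fvert n None = None"
  by (simp add: shift_fvert_def)

lemma inj_shift_fvert: "inj (shift_fvert n)"
  unfolding inj_def shift_fvert_def by (auto split: option.splits)

definition friendship_triangle :: "nat \<Rightarrow> fvert set set" where
  "friendship_triangle k = {{None, Some (k, 0)}, {None, Some (k, 1)}, {Some (k, 0), Some (k, 1)}}"

lemma friendship_edges_eq_UN_triangles: "friendship_edges n = (\<Union>k<n. friendship_triangle k)"
  unfolding friendship_edges_def friendship_triangle_def ..

lemma image_shift_friendship_triangle:
  "image (shift_fvert n) ` friendship_triangle k = friendship_triangle (k + n)"
  by (simp add: friendship_triangle_def shift_fvert_def)

lemma None_in_friendship_vertices [simp]: "None \<in> friendship_vertices n"
  by (simp add: friendship_vertices_def)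

lemma finite_friendship_vertices: "finite (friendship_vertices n)"
proof -
  have "friendship_vertices n \<subseteq> insert None (Some ` ({..<n} \<times> {..<2}))"
    unfolding friendship_vertices_def by auto
  then show ?thesis by (rule finite_subset) auto
qed

lemma finite_friendship_edges: "finite (friendship_edges n)"
  unfolding friendship_edges_def by auto

lemma friendship_edge_subset: "e \<in> friendship_edges n \<Longrightarrow> e \<subseteq> friendship_vertices n"
  unfolding friendship_edges_def friendship_vertices_def by auto

lemma friendship_vertices_add:
  "friendship_vertices (n1 + n2) = friendship_vertices n1 \<union> shift_fvert n1 ` friendship_vertices n2"
proof (intro equalityI subsetI)
  fix x assume "x \<in> friendship_vertices (n1 + n2)"
  then consider "x \<in> friendship_vertices n1"
    | k b where "x = Some (k, b)" "n1 \<le> k" "k < n1 + n2" "b < 2"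
    unfolding friendship_vertices_def by force
  then show "x \<in> friendship_vertices n1 \<union> shift_fvert n1 ` friendship_vertices n2"
  proof cases
    case (2 k b)
    then have "x = shift_fvert n1 (Some (k - n1, b))" "Some (k - n1, b) \<in> friendship_vertices n2"
      by (auto simp: shift_fvert_def friendship_vertices_def)
    then show ?thesis by blast
  qed simp
qed (auto simp: friendship_vertices_def shift_fvert_def)

lemma friendship_vertices_Int_shift:
  "friendship_vertices n1 \<inter> shift_fvert n1 ` friendship_vertices n2 = {None}"
  by (auto simp: friendship_vertices_def shift_fvert_def)

lemma friendship_edges_add:
  "friendship_edges (n1 + n2) = friendship_edges n1 \<union> image (shift_fvert n1) ` friendship_edges n2"
  unfolding friendship_edges_eq_UN_triangles lessThan_add_eq_Un_image UN_Un image_UN SUP_image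
  by (simp add: comp_def image_shift_friendship_triangle)

lemma friendship_edges_Int_shift:
  "friendship_edges n1 \<inter> image (shift_fvert n1) ` friendship_edges n2 = {}"
proof -
  have False
    if e1: "e \<in> friendship_edges n1" and e2: "e \<in> image (shift_fvert n1) ` friendship_edges n2" for e
  proof -
    obtain k b where "Some (k, b) \<in> e" "k < n1"
      using e1 unfolding friendship_edges_def by blast
    moreover obtain w where "e = shift_fvert n1 ` w"
      using e2 by blast
    ultimately show False
      unfolding shift_fvert_def by (auto split: option.splits)
  qed
  then show ?thesis by blast
qed

lemma friendship_sum_left:
  "l1 None = 0 \<Longrightarrow> v \<in> friendship_vertices n1 \<Longrightarrow> friendship_sum n1 l1 l2 v = l1 v"
  unfolding friendship_vertices_def friendship_sum_def by auto

lemma friendship_sum_shift: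
  "l2 None = 0 \<Longrightarrow> friendship_sum n1 l1 l2 (shift_fvert n1 v) = l2 v"
  unfolding friendship_sum_def shift_fvert_def by (auto split: option.splits)

lemma image_friendship_sum:
  assumes "l1 None = 0" "l2 None = 0"
  shows "friendship_sum n1 l1 l2 ` friendship_vertices (n1 + n2)
           = l1 ` friendship_vertices n1 \<union> l2 ` friendship_vertices n2"
  unfolding friendship_vertices_add image_Un image_image
  using friendship_sum_left[of l1] friendship_sum_shift[of l2] assms by simp

lemma vfreq_friendship_sum:
  assumes "l1 None = 0" "l2 None = 0"
  shows "vfreq m (friendship_vertices (n1 + n2)) (friendship_sum n1 l1 l2) a
             + (if a = 0 then 1 else 0)
           = vfreq m (friendship_vertices n1) l1 a + vfreq m (friendship_vertices n2) l2 a"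
proof -
  let ?A = "{v \<in> friendship_vertices n1. l1 v = a}"
  let ?B = "{v \<in> friendship_vertices n2. l2 v = a}"
  have split: "{v \<in> friendship_vertices (n1 + n2). friendship_sum n1 l1 l2 v = a}
                 = ?A \<union> shift_fvert n1 ` ?B"
    unfolding friendship_vertices_add
    by (rule Collect_Un_image_eq) (simp_all add: friendship_sum_left friendship_sum_shift assms)
  have "?A \<inter> shift_fvert n1 ` ?B \<subseteq> friendship_vertices n1 \<inter> shift_fvert n1 ` friendship_vertices n2"
    by (intro Int_mono image_mono) auto
  then have "?A \<inter> shift_fvert n1 ` ?B \<subseteq> {None}"
    unfolding friendship_vertices_Int_shift .
  moreover have "None \<in> ?A \<inter> shift_fvert n1 ` ?B \<longleftrightarrow> a = 0"
    using assms image_eqI[of None "shift_fvert n1" None] by auto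
  ultimately have "card (?A \<inter> shift_fvert n1 ` ?B) = (if a = 0 then 1 else 0)"
    by (simp only: card_subset_singleton)
  moreover have "card (shift_fvert n1 ` ?B) = card ?B"
    by (simp add: card_image inj_on_subset[OF inj_shift_fvert])
  moreover have "finite ?A" "finite (shift_fvert n1 ` ?B)"
    using finite_friendship_vertices by simp_all
  ultimately show ?thesis
    unfolding vfreq_def split using card_Un_Int[of ?A "shift_fvert n1 ` ?B"] by linarith
qed

lemma sum_shift_fvert: "(\<Sum>v\<in>shift_fvert n ` e. f v) = (\<Sum>v\<in>e. f (shift_fvert n v))"
  by (simp add: sum.reindex inj_on_subset[OF inj_shift_fvert])

lemma efreq_friendship_sum:
  assumes "l1 None = 0" "l2 None = 0"
  shows "efreq m (friendship_edges (n1 + n2)) (friendship_sum n1 l1 l2) a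
           = efreq m (friendship_edges n1) l1 a + efreq m (friendship_edges n2) l2 a"
proof -
  let ?A = "{e \<in> friendship_edges n1. (\<Sum>v\<in>e. l1 v) mod m = a}"
  let ?B = "{e \<in> friendship_edges n2. (\<Sum>v\<in>e. l2 v) mod m = a}"
  have split: "{e \<in> friendship_edges (n1 + n2). (\<Sum>v\<in>e. friendship_sum n1 l1 l2 v) mod m = a}
                 = ?A \<union> image (shift_fvert n1) ` ?B"
    unfolding friendship_edges_add
  proof (rule Collect_Un_image_eq)
    fix e assume "e \<in> friendship_edges n1"
    then have "(\<Sum>v\<in>e. friendship_sum n1 l1 l2 v) = (\<Sum>v\<in>e. l1 v)"
      using friendship_edge_subset friendship_sum_left[of l1] assms(1) by (intro sum.cong) blast+
    then show "(\<Sum>v\<in>e. friendship_sum n1 l1 l2 v) mod m = a \<longleftrightarrow> (\<Sum>v\<in>e. l1 v) mod m = a"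
      by simp
  qed (simp add: sum_shift_fvert friendship_sum_shift assms(2))
  have "?A \<inter> image (shift_fvert n1) ` ?B = {}"
    using friendship_edges_Int_shift[of n1 n2] by blast
  moreover have "card (image (shift_fvert n1) ` ?B) = card ?B"
    by (intro card_image inj_onI) (simp add: inj_image_eq_iff[OF inj_shift_fvert])
  ultimately show ?thesis
    unfolding efreq_def split
    using card_Un_disjoint[of ?A "image (shift_fvert n1) ` ?B"] finite_friendship_edges by simp
qed

lemma Zm_cordial_if_freqs_offset:
  assumes "Zm_cordial m V E l" and "\<forall>v\<in>V'. l' v < m"
    and "\<And>a. a < m \<Longrightarrow> int (vfreq m V' l' a) = int (vfreq m V l a) + r"
    and "\<And>a. a < m \<Longrightarrow> int (efreq m E' l' a) = int (efreq m E l a) + s"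
  shows "Zm_cordial m V' E' l'"
  using assms unfolding Zm_cordial_def by simp

theorem lemma8p2:
  fixes m n1 n2 :: nat and l1 l2 :: "fvert \<Rightarrow> nat" and r s :: int
  assumes "m \<ge> 1"
    and "Zm_cordial m (friendship_vertices n1) (friendship_edges n1) l1" and "l1 None = 0"
    and "Zm_cordial m (friendship_vertices n2) (friendship_edges n2) l2" and "l2 None = 0"
    and "int (vfreq m (friendship_vertices n2) l2 0) = r + 1"
    and "\<And>i. i < m \<Longrightarrow> i \<noteq> 0 \<Longrightarrow> int (vfreq m (friendship_vertices n2) l2 i) = r"
    and "\<And>j. j < m \<Longrightarrow> int (efreq m (friendship_edges n2) l2 j) = s"
  shows "Zm_cordial m (friendship_vertices (n1 + n2)) (friendship_edges (n1 + n2))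
           (friendship_sum n1 l1 l2)"
proof (rule Zm_cordial_if_freqs_offset[OF assms(2)])
  have "\<forall>v\<in>friendship_vertices n1. l1 v < m" "\<forall>v\<in>friendship_vertices n2. l2 v < m"
    using assms(2,4) unfolding Zm_cordial_def by blast+
  then have "friendship_sum n1 l1 l2 ` friendship_vertices (n1 + n2) \<subseteq> {..<m}"
    using image_friendship_sum[of l1 l2, OF assms(3,5)] by auto
  then show "\<forall>v\<in>friendship_vertices (n1 + n2). friendship_sum n1 l1 l2 v < m"
    by auto
next
  fix a assume "a < m"
  then show "int (vfreq m (friendship_vertices (n1 + n2)) (friendship_sum n1 l1 l2) a)
               = int (vfreq m (friendship_vertices n1) l1 a) + r"
    using vfreq_friendship_sum[of l1 l2, OF assms(3,5), of m n1 n2 a] assms(6) assms(7)[of a]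
    by (cases "a = 0") auto
next
  fix a assume "a < m"
  then show "int (efreq m (friendship_edges (n1 + n2)) (friendship_sum n1 l1 l2) a)
               = int (efreq m (friendship_edges n1) l1 a) + s"
    using efreq_friendship_sum[of l1 l2, OF assms(3,5), of m n1 n2 a] assms(8)[of a] by simp
qed

end
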